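(* Let $g$ be the pp-wave metric $ds^2=H(u,x^1,x^2)\,du^2+2\,du\,dv+(dx^1)^2+(dx^2)^2$, $0<b<1$, $m>0$, and consider the Finslerian pp-wave geodesic Lagrangian $$L=-\frac{1}{2n}\,\dot u^{2b}\left(-H\dot u^2-2\dot u\dot v-\delta_{ij}\dot x^i\dot x^j\right)^{1-b}-\frac{m^2}{2}n .$$ Along any solution of its Euler–Lagrange equations with $\dot u>0$ and $\mathcal G:=-H\dot u^2-2\dot u\dot v-\delta_{ij}\dot x^i\dot x^j>0$, the momentum $p_v=\partial L/\partial\dot v=(1-b)\dot u^{1+2b}\mathcal G^{-b}/n$ is constant, equal to some $\pi_v>0$, and $\mathcal G/\dot u^2$ equals the constant $$M_b^2=\left[\frac{(1-b)^2m^2}{\pi_v^2}\right]^{\frac{1}{1+b}} .$$ Moreover, if $\Upsilon$ is any vector field satisfying $\mathcal L_\Upsilon\left(g_{\mu\nu}-\frac{b}{1-b}M_b^2K_{\mu\nu}\right)=2\Omega(\mathrm x)\left(g_{\mu\nu}+M_b^2K_{\mu\nu}\right)$ with $K=du\otimes du$ and this value of $M_b^2$, then $I=\Upsilon^\mu\,\partial L/\partial\dot{\mathrm x}^\mu$ is constant along such a solution.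
   Context: Coordinates $(u,v,x^1,x^2)$, $i,j=1,2$, dots denote $d/d\lambda$, and $n(\lambda)>0$ is the einbein, varied independently (its Euler–Lagrange equation gives $n=\frac{1}{m}\dot u^{b}\mathcal G^{(1-b)/2}$). Here $\mathcal K=K_{\mu\nu}\dot{\mathrm x}^\mu\dot{\mathrm x}^\nu=\dot u^2$, so $M_b^{-2}=\mathcal K/\mathcal G$. *)

theory Defs
  imports "HOL-Analysis.Analysis"
begin

text \<open>Coordinates: a point is x :: real^4 with x$1 = u, x$2 = v, x$3 = x^1, x$4 = x^2.
  The pp-wave profile H depends on (u, x^1, x^2).\<close>

definition Hat :: "(real \<Rightarrow> real \<Rightarrow> real \<Rightarrow> real) \<Rightarrow> real^4 \<Rightarrow> real" where
  "Hat H x = H (x$1) (x$3) (x$4)"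

definition ppg :: "(real \<Rightarrow> real \<Rightarrow> real \<Rightarrow> real) \<Rightarrow> real^4 \<Rightarrow> 4 \<Rightarrow> 4 \<Rightarrow> real" where
  "ppg H x i j =
     (if i = 1 \<and> j = 1 then Hat H x
      else if (i = 1 \<and> j = 2) \<or> (i = 2 \<and> j = 1) then 1
      else if (i = 3 \<and> j = 3) \<or> (i = 4 \<and> j = 4) then 1
      else 0)"

definition Kdu :: "real^4 \<Rightarrow> 4 \<Rightarrow> 4 \<Rightarrow> real" where
  "Kdu x i j = (if i = 1 \<and> j = 1 then 1 else 0)"

definition Gpp :: "(real \<Rightarrow> real \<Rightarrow> real \<Rightarrow> real) \<Rightarrow> real^4 \<Rightarrow> real^4 \<Rightarrow> real" where
  "Gpp H x xd = - Hat H x * (xd$1)^2 - 2 * (xd$1) * (xd$2) - (xd$3)^2 - (xd$4)^2"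

definition Lag :: "real \<Rightarrow> real \<Rightarrow> (real \<Rightarrow> real \<Rightarrow> real \<Rightarrow> real) \<Rightarrow> real^4 \<Rightarrow> real^4 \<Rightarrow> real \<Rightarrow> real" where
  "Lag b m H x xd n =
     - (1 / (2 * n)) * (xd$1) powr (2 * b) * (Gpp H x xd) powr (1 - b) - m^2 / 2 * n"

definition dL_dxd :: "real \<Rightarrow> real \<Rightarrow> (real \<Rightarrow> real \<Rightarrow> real \<Rightarrow> real) \<Rightarrow> 4 \<Rightarrow> real^4 \<Rightarrow> real^4 \<Rightarrow> real \<Rightarrow> real" where
  "dL_dxd b m H \<mu> x xd n = deriv (\<lambda>s. Lag b m H x (xd + s *\<^sub>R axis \<mu> 1) n) 0"

definition dL_dx :: "real \<Rightarrow> real \<Rightarrow> (real \<Rightarrow> real \<Rightarrow> real \<Rightarrow> real) \<Rightarrow> 4 \<Rightarrow> real^4 \<Rightarrow> real^4 \<Rightarrow> real \<Rightarrow> real" where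
  "dL_dx b m H \<mu> x xd n = deriv (\<lambda>s. Lag b m H (x + s *\<^sub>R axis \<mu> 1) xd n) 0"

definition dL_dn :: "real \<Rightarrow> real \<Rightarrow> (real \<Rightarrow> real \<Rightarrow> real \<Rightarrow> real) \<Rightarrow> real^4 \<Rightarrow> real^4 \<Rightarrow> real \<Rightarrow> real" where
  "dL_dn b m H x xd n = deriv (\<lambda>s. Lag b m H x xd s) n"

definition EL_solution ::
  "real \<Rightarrow> real \<Rightarrow> (real \<Rightarrow> real \<Rightarrow> real \<Rightarrow> real) \<Rightarrow> real set \<Rightarrow>
   (real \<Rightarrow> real^4) \<Rightarrow> (real \<Rightarrow> real^4) \<Rightarrow> (real \<Rightarrow> real) \<Rightarrow> bool" where
  "EL_solution b m H J \<gamma> gd n \<longleftrightarrow>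
     (\<forall>t\<in>J. (\<gamma> has_vector_derivative gd t) (at t)) \<and>
     (\<forall>t\<in>J. \<forall>\<mu>. ((\<lambda>s. dL_dxd b m H \<mu> (\<gamma> s) (gd s) (n s))
                   has_real_derivative dL_dx b m H \<mu> (\<gamma> t) (gd t) (n t)) (at t)) \<and>
     (\<forall>t\<in>J. dL_dn b m H (\<gamma> t) (gd t) (n t) = 0)"

definition pd :: "(real^4 \<Rightarrow> real) \<Rightarrow> 4 \<Rightarrow> real^4 \<Rightarrow> real" where
  "pd f \<nu> x = deriv (\<lambda>s. f (x + s *\<^sub>R axis \<nu> 1)) 0"

definition lie2 :: "(real^4 \<Rightarrow> real^4) \<Rightarrow> (real^4 \<Rightarrow> 4 \<Rightarrow> 4 \<Rightarrow> real) \<Rightarrow> real^4 \<Rightarrow> 4 \<Rightarrow> 4 \<Rightarrow> real" where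
  "lie2 Y T x \<mu> \<nu> =
     (\<Sum>\<rho>\<in>UNIV. Y x $ \<rho> * pd (\<lambda>y. T y \<mu> \<nu>) \<rho> x)
   + (\<Sum>\<rho>\<in>UNIV. T x \<rho> \<nu> * pd (\<lambda>y. Y y $ \<rho>) \<mu> x)
   + (\<Sum>\<rho>\<in>UNIV. T x \<mu> \<rho> * pd (\<lambda>y. Y y $ \<rho>) \<nu> x)"

end

theory Submission
  imports Defs
begin

text \<open>
  Write G for Gpp, u' for the u-velocity and T = g - b/(1-b) (G/u'^2) K.  Differentiating L gives
  dL/dx'^mu = c T_mu_nu x'^nu and dL/dx^mu = (c/2) u'^2 d_mu H with c = (1-b) u'^(2b) G^(-b) / n.
  Since L does not depend on v, p_v = c u' is constant along a solution, and the constraint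
  dL/dn = 0, i.e. u'^(2b) G^(1-b) = m^2 n^2, eliminates n and shows that G/u'^2 is the constant M_b^2.
  By the Euler--Lagrange equations dI/dlambda = (c/2) x'^mu x'^nu (Lie_Upsilon T)_mu_nu, and once
  G/u'^2 = M_b^2 the hypothesis on Upsilon turns this into c Omega (g + M_b^2 K)(x', x')
  = c Omega (M_b^2 u'^2 - G) = 0.
\<close>

lemma has_real_derivative_along_line:
  fixes f :: "'a::real_normed_vector \<Rightarrow> real"
  assumes "(f has_derivative Df) (at x)"
  shows "((\<lambda>s. f (x + s *\<^sub>R e)) has_real_derivative Df e) (at 0)"
proof -
  have "((\<lambda>s. x + s *\<^sub>R e) has_derivative (\<lambda>s. s *\<^sub>R e)) (at 0)"
    by (auto intro!: derivative_eq_intros)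
  with assms have "((\<lambda>s. f (x + s *\<^sub>R e)) has_derivative (\<lambda>s. Df (s *\<^sub>R e))) (at 0)"
    using has_derivative_compose[of "\<lambda>s. x + s *\<^sub>R e" _ 0 UNIV f Df] by simp
  moreover have "(\<lambda>s. Df (s *\<^sub>R e)) = (*) (Df e)"
    using linear_scale[OF has_derivative_linear[OF assms]] by (auto simp: fun_eq_iff)
  ultimately show ?thesis by (simp add: has_field_derivative_def)
qed

lemma pd_eq_derivative:
  assumes "(f has_derivative Df) (at x)"
  shows "pd f \<nu> x = Df (axis \<nu> 1)"
  unfolding pd_def by (rule DERIV_imp_deriv[OF has_real_derivative_along_line[OF assms]])

lemma pd_vec_nth:
  fixes Y :: "real^4 \<Rightarrow> real^4"
  assumes "(Y has_derivative DY) (at x)"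
  shows "pd (\<lambda>y. Y y $ \<rho>) \<nu> x = DY (axis \<nu> 1) $ \<rho>"
  by (rule pd_eq_derivative[OF bounded_linear.has_derivative[OF bounded_linear_vec_nth assms]])

lemma has_vector_derivative_compose_derivative:
  assumes "(g has_vector_derivative v) (at t)" and "(f has_derivative Df) (at (g t))"
  shows "((\<lambda>s. f (g s)) has_vector_derivative Df v) (at t)"
proof -
  have "((\<lambda>s. f (g s)) has_derivative (\<lambda>h. Df (h *\<^sub>R v))) (at t)"
    using has_derivative_compose[OF assms(1)[unfolded has_vector_derivative_def] assms(2)] .
  moreover have "(\<lambda>h. Df (h *\<^sub>R v)) = (\<lambda>h. h *\<^sub>R Df v)"
    using linear_scale[OF has_derivative_linear[OF assms(2)]] by (auto simp: fun_eq_iff)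
  ultimately show ?thesis by (simp add: has_vector_derivative_def)
qed

lemma sum_swap_inner_outer:
  "(\<Sum>i\<in>A. \<Sum>j\<in>B. \<Sum>k\<in>C. f i j k) = (\<Sum>k\<in>C. \<Sum>i\<in>A. \<Sum>j\<in>B. f i j k)"
proof -
  have "(\<Sum>i\<in>A. \<Sum>j\<in>B. \<Sum>k\<in>C. f i j k) = (\<Sum>i\<in>A. \<Sum>k\<in>C. \<Sum>j\<in>B. f i j k)"
    by (intro sum.cong refl sum.swap)
  also have "\<dots> = (\<Sum>k\<in>C. \<Sum>i\<in>A. \<Sum>j\<in>B. f i j k)"
    by (rule sum.swap)
  finally show ?thesis .
qed

lemma lie2_quadratic_form:
  fixes Y :: "real^4 \<Rightarrow> real^4"
  assumes DY: "(Y has_derivative DY) (at x)" and sym: "\<And>i j. T x i j = T x j i"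
  shows "(\<Sum>\<mu>\<in>UNIV. \<Sum>\<nu>\<in>UNIV. w$\<mu> * w$\<nu> * lie2 Y T x \<mu> \<nu>)
       = (\<Sum>\<rho>\<in>UNIV. Y x $ \<rho> * (\<Sum>\<mu>\<in>UNIV. \<Sum>\<nu>\<in>UNIV. w$\<mu> * w$\<nu> * pd (\<lambda>y. T y \<mu> \<nu>) \<rho> x))
         + 2 * (\<Sum>\<rho>\<in>UNIV. DY w $ \<rho> * (\<Sum>\<nu>\<in>UNIV. T x \<rho> \<nu> * w$\<nu>))"
proof -
  let ?d = "\<lambda>\<mu> \<rho>. DY (axis \<mu> 1) $ \<rho>"
  have DYw: "DY w $ \<rho> = (\<Sum>\<mu>\<in>UNIV. w$\<mu> * ?d \<mu> \<rho>)" for \<rho>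
    using linear_componentwise[of DY w \<rho>] has_derivative_linear[OF DY]
    by (simp add: linear_matrix_vector_mul_eq)
  have transport: "(\<Sum>\<mu>\<in>UNIV. \<Sum>\<nu>\<in>UNIV. w$\<mu> * w$\<nu> * (\<Sum>\<rho>\<in>UNIV. T x \<rho> \<nu> * ?d \<mu> \<rho>))
      = (\<Sum>\<rho>\<in>UNIV. DY w $ \<rho> * (\<Sum>\<nu>\<in>UNIV. T x \<rho> \<nu> * w$\<nu>))"
  proof -
    have "(\<Sum>\<mu>\<in>UNIV. \<Sum>\<nu>\<in>UNIV. w$\<mu> * w$\<nu> * (\<Sum>\<rho>\<in>UNIV. T x \<rho> \<nu> * ?d \<mu> \<rho>))
        = (\<Sum>\<mu>\<in>UNIV. \<Sum>\<nu>\<in>UNIV. \<Sum>\<rho>\<in>UNIV. (w$\<mu> * ?d \<mu> \<rho>) * (T x \<rho> \<nu> * w$\<nu>))"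
      by (simp add: sum_distrib_left mult_ac)
    also have "\<dots> = (\<Sum>\<rho>\<in>UNIV. \<Sum>\<mu>\<in>UNIV. \<Sum>\<nu>\<in>UNIV. (w$\<mu> * ?d \<mu> \<rho>) * (T x \<rho> \<nu> * w$\<nu>))"
      by (rule sum_swap_inner_outer)
    also have "\<dots> = (\<Sum>\<rho>\<in>UNIV. DY w $ \<rho> * (\<Sum>\<nu>\<in>UNIV. T x \<rho> \<nu> * w$\<nu>))"
      by (simp add: DYw sum_product)
    finally show ?thesis .
  qed
  have transport': "(\<Sum>\<mu>\<in>UNIV. \<Sum>\<nu>\<in>UNIV. w$\<mu> * w$\<nu> * (\<Sum>\<rho>\<in>UNIV. T x \<mu> \<rho> * ?d \<nu> \<rho>))
      = (\<Sum>\<rho>\<in>UNIV. DY w $ \<rho> * (\<Sum>\<nu>\<in>UNIV. T x \<rho> \<nu> * w$\<nu>))"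
  proof -
    have flip: "(\<Sum>\<rho>\<in>UNIV. T x \<mu> \<rho> * ?d \<nu> \<rho>) = (\<Sum>\<rho>\<in>UNIV. T x \<rho> \<mu> * ?d \<nu> \<rho>)" for \<mu> \<nu>
      using sym by simp
    have "(\<Sum>\<mu>\<in>UNIV. \<Sum>\<nu>\<in>UNIV. w$\<mu> * w$\<nu> * (\<Sum>\<rho>\<in>UNIV. T x \<mu> \<rho> * ?d \<nu> \<rho>))
        = (\<Sum>\<nu>\<in>UNIV. \<Sum>\<mu>\<in>UNIV. w$\<mu> * w$\<nu> * (\<Sum>\<rho>\<in>UNIV. T x \<mu> \<rho> * ?d \<nu> \<rho>))"
      by (rule sum.swap)
    also have "\<dots> = (\<Sum>\<nu>\<in>UNIV. \<Sum>\<mu>\<in>UNIV. w$\<nu> * w$\<mu> * (\<Sum>\<rho>\<in>UNIV. T x \<rho> \<mu> * ?d \<nu> \<rho>))"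
      unfolding flip by (simp add: mult.commute)
    also note transport
    finally show ?thesis .
  qed
  have transversal: "(\<Sum>\<mu>\<in>UNIV. \<Sum>\<nu>\<in>UNIV. w$\<mu> * w$\<nu> * (\<Sum>\<rho>\<in>UNIV. Y x $ \<rho> * pd (\<lambda>y. T y \<mu> \<nu>) \<rho> x))
      = (\<Sum>\<rho>\<in>UNIV. Y x $ \<rho> * (\<Sum>\<mu>\<in>UNIV. \<Sum>\<nu>\<in>UNIV. w$\<mu> * w$\<nu> * pd (\<lambda>y. T y \<mu> \<nu>) \<rho> x))"
  proof -
    have "(\<Sum>\<mu>\<in>UNIV. \<Sum>\<nu>\<in>UNIV. w$\<mu> * w$\<nu> * (\<Sum>\<rho>\<in>UNIV. Y x $ \<rho> * pd (\<lambda>y. T y \<mu> \<nu>) \<rho> x))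
        = (\<Sum>\<mu>\<in>UNIV. \<Sum>\<nu>\<in>UNIV. \<Sum>\<rho>\<in>UNIV. Y x $ \<rho> * (w$\<mu> * w$\<nu> * pd (\<lambda>y. T y \<mu> \<nu>) \<rho> x))"
      by (simp add: sum_distrib_left mult.left_commute)
    also have "\<dots> = (\<Sum>\<rho>\<in>UNIV. \<Sum>\<mu>\<in>UNIV. \<Sum>\<nu>\<in>UNIV. Y x $ \<rho> * (w$\<mu> * w$\<nu> * pd (\<lambda>y. T y \<mu> \<nu>) \<rho> x))"
      by (rule sum_swap_inner_outer)
    finally show ?thesis
      by (simp add: sum_distrib_left)
  qed
  show ?thesis
    using transversal transport transport'
    by (simp add: lie2_def pd_vec_nth[OF DY] distrib_left sum.distrib)
qed

lemma ppg_sym: "ppg H x i j = ppg H x j i"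
  by (auto simp: ppg_def)

lemma Kdu_sym: "Kdu x i j = Kdu x j i"
  by (auto simp: Kdu_def)

lemma ppg_quadratic_form: "(\<Sum>\<mu>\<in>UNIV. \<Sum>\<nu>\<in>UNIV. w$\<mu> * w$\<nu> * ppg H x \<mu> \<nu>) = - Gpp H x w"
  by (simp add: sum_4 ppg_def Gpp_def power2_eq_square algebra_simps)

lemma Kdu_quadratic_form: "(\<Sum>\<mu>\<in>UNIV. \<Sum>\<nu>\<in>UNIV. w$\<mu> * w$\<nu> * Kdu x \<mu> \<nu>) = (w$1)^2"
  by (simp add: sum_4 Kdu_def power2_eq_square)

lemma pd_ppg_minus_Kdu:
  assumes "(Hat H has_derivative DH) (at x)"
  shows "pd (\<lambda>y. ppg H y \<mu> \<nu> - c * Kdu y \<mu> \<nu>) \<rho> x = (if \<mu> = 1 \<and> \<nu> = 1 then DH (axis \<rho> 1) else 0)"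
proof (cases "\<mu> = 1 \<and> \<nu> = 1")
  case True
  then have "(\<lambda>y. ppg H y \<mu> \<nu> - c * Kdu y \<mu> \<nu>) = (\<lambda>y. Hat H y - c)"
    by (auto simp: ppg_def Kdu_def)
  moreover have "((\<lambda>y. Hat H y - c) has_derivative DH) (at x)"
    using assms by (auto intro!: derivative_eq_intros)
  ultimately show ?thesis
    using True pd_eq_derivative by simp
next
  case False
  then have "(\<lambda>y. ppg H y \<mu> \<nu> - c * Kdu y \<mu> \<nu>) = (\<lambda>y. ppg H x \<mu> \<nu> - c * Kdu x \<mu> \<nu>)"
    by (auto simp: ppg_def Kdu_def)
  then show ?thesis
    using False by (auto simp: pd_def)
qed

lemma Gpp_has_derivative_velocity:
  "((\<lambda>s. Gpp H x (w + s *\<^sub>R axis \<mu> 1)) has_real_derivative - 2 * (\<Sum>\<nu>\<in>UNIV. ppg H x \<mu> \<nu> * w$\<nu>)) (at 0)"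
proof -
  let ?e = "axis \<mu> (1::real)"
  have "((\<lambda>s. Gpp H x (w + s *\<^sub>R ?e)) has_real_derivative
      - 2 * (Hat H x * w$1 * ?e$1 + ?e$1 * w$2 + w$1 * ?e$2 + w$3 * ?e$3 + w$4 * ?e$4)) (at 0)"
    unfolding Gpp_def by (auto intro!: derivative_eq_intros simp: algebra_simps)
  moreover have "Hat H x * w$1 * ?e$1 + ?e$1 * w$2 + w$1 * ?e$2 + w$3 * ?e$3 + w$4 * ?e$4
      = (\<Sum>\<nu>\<in>UNIV. ppg H x \<mu> \<nu> * w$\<nu>)"
    using exhaust_4[of \<mu>] by (auto simp: sum_4 ppg_def axis_def)
  ultimately show ?thesis by simp
qed

lemma dL_dxd_eq:
  assumes w1: "0 < w$1" and G: "0 < Gpp H x w" and n: "n \<noteq> 0" and b: "b \<noteq> 1"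
  shows "dL_dxd b m H \<mu> x w n = (1 - b) * (w$1) powr (2*b) * Gpp H x w powr (- b) / n
      * (\<Sum>\<nu>\<in>UNIV. (ppg H x \<mu> \<nu> - b / (1 - b) * (Gpp H x w / (w$1)^2) * Kdu x \<mu> \<nu>) * w$\<nu>)"
proof -
  let ?e = "axis \<mu> (1::real)"
  let ?G = "Gpp H x w" and ?p = "\<Sum>\<nu>\<in>UNIV. ppg H x \<mu> \<nu> * w$\<nu>"
  have dU: "((\<lambda>s. (w + s *\<^sub>R ?e)$1 powr (2*b)) has_real_derivative 2*b * (w$1) powr (2*b - 1) * ?e$1) (at 0)"
    using w1 by (auto intro!: derivative_eq_intros)
  have dG: "((\<lambda>s. Gpp H x (w + s *\<^sub>R ?e) powr (1 - b)) has_real_derivative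
      (1 - b) * ?G powr (- b) * (- 2 * ?p)) (at 0)"
    using DERIV_fun_powr[OF Gpp_has_derivative_velocity, of H x w \<mu> "1 - b"] G by simp
  have "((\<lambda>s. - (1 / (2*n)) * ((w + s *\<^sub>R ?e)$1 powr (2*b) * Gpp H x (w + s *\<^sub>R ?e) powr (1 - b))
        - m^2 / 2 * n) has_real_derivative
      - (1 / (2*n)) * (2*b * (w$1) powr (2*b - 1) * ?e$1 * ?G powr (1 - b)
        + (w$1) powr (2*b) * ((1 - b) * ?G powr (- b) * (- 2 * ?p))) - 0) (at 0)"
    by (intro DERIV_diff DERIV_cmult DERIV_const) (use DERIV_mult[OF dU dG] in \<open>simp add: mult_ac\<close>)
  then have "dL_dxd b m H \<mu> x w n = - (1 / (2*n)) * (2*b * (w$1) powr (2*b - 1) * ?e$1 * ?G powr (1 - b)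
        + (w$1) powr (2*b) * ((1 - b) * ?G powr (- b) * (- 2 * ?p)))"
    unfolding dL_dxd_def Lag_def by (simp add: mult.assoc DERIV_imp_deriv)
  also have "(w$1) powr (2*b - 1) = (w$1) powr (2*b) / w$1"
    using w1 by (simp add: powr_diff)
  also have "?G powr (1 - b) = ?G * ?G powr (- b)"
    using G powr_add[of ?G 1 "- b"] by simp
  also have "- (1 / (2*n)) * (2*b * ((w$1) powr (2*b) / w$1) * ?e$1 * (?G * ?G powr (- b))
        + (w$1) powr (2*b) * ((1 - b) * ?G powr (- b) * (- 2 * ?p)))
      = (1 - b) * (w$1) powr (2*b) * ?G powr (- b) / n * (?p - b / (1 - b) * (?G / (w$1)^2) * (?e$1 * w$1))"
    using w1 G n b by (simp add: field_simps power2_eq_square)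
  finally have "dL_dxd b m H \<mu> x w n = (1 - b) * (w$1) powr (2*b) * ?G powr (- b) / n
      * (?p - b / (1 - b) * (?G / (w$1)^2) * (?e$1 * w$1))" .
  moreover have "(\<Sum>\<nu>\<in>UNIV. (ppg H x \<mu> \<nu> - c * Kdu x \<mu> \<nu>) * w$\<nu>) = ?p - c * (?e$1 * w$1)" for c
    by (simp add: sum_4 Kdu_def axis_def algebra_simps)
  ultimately show ?thesis by (simp only:)
qed

lemma dL_dx_eq:
  assumes G: "0 < Gpp H x w" and DH: "(Hat H has_derivative DH) (at x)"
  shows "dL_dx b m H \<mu> x w n = (1 - b) * (w$1) powr (2*b) * Gpp H x w powr (- b) / (2*n)
      * (w$1)^2 * DH (axis \<mu> 1)"
proof -
  let ?e = "axis \<mu> (1::real)" and ?G = "Gpp H x w"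
  have dH: "((\<lambda>s. Hat H (x + s *\<^sub>R ?e)) has_real_derivative DH ?e) (at 0)"
    by (rule has_real_derivative_along_line[OF DH])
  have dG: "((\<lambda>s. Gpp H (x + s *\<^sub>R ?e) w) has_real_derivative - ((w$1)^2 * DH ?e)) (at 0)"
    unfolding Gpp_def by (auto intro!: derivative_eq_intros dH simp: algebra_simps)
  have "((\<lambda>s. Gpp H (x + s *\<^sub>R ?e) w powr (1 - b)) has_real_derivative
      (1 - b) * ?G powr (- b) * - ((w$1)^2 * DH ?e)) (at 0)"
    using DERIV_fun_powr[OF dG, of "1 - b"] G by simp
  then have "((\<lambda>s. - (1 / (2*n)) * (w$1) powr (2*b) * Gpp H (x + s *\<^sub>R ?e) w powr (1 - b) - m^2 / 2 * n)
      has_real_derivative - (1 / (2*n)) * (w$1) powr (2*b) * ((1 - b) * ?G powr (- b) * - ((w$1)^2 * DH ?e)) - 0) (at 0)"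
    by (intro DERIV_diff DERIV_cmult DERIV_const)
  then have "dL_dx b m H \<mu> x w n
      = - (1 / (2*n)) * (w$1) powr (2*b) * ((1 - b) * ?G powr (- b) * - ((w$1)^2 * DH ?e)) - 0"
    unfolding dL_dx_def Lag_def by (rule DERIV_imp_deriv)
  then show ?thesis
    by (simp add: divide_simps algebra_simps)
qed

lemma dL_dx_v_eq_zero: "dL_dx b m H 2 x w n = 0"
proof -
  have "Lag b m H (x + s *\<^sub>R axis 2 1) w n = Lag b m H x w n" for s
    by (simp add: Lag_def Gpp_def Hat_def axis_def)
  then show ?thesis
    unfolding dL_dx_def by simp
qed

lemma dL_dn_eq:
  assumes "n \<noteq> 0"
  shows "dL_dn b m H x w n = (w$1) powr (2*b) * Gpp H x w powr (1 - b) / (2 * n^2) - m^2 / 2"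
proof -
  have "((\<lambda>s. Lag b m H x w s) has_real_derivative
      (w$1) powr (2*b) * Gpp H x w powr (1 - b) / (2 * n^2) - m^2 / 2) (at n)"
    unfolding Lag_def using assms
    by (auto intro!: derivative_eq_intros simp: field_simps power2_eq_square)
  then show ?thesis
    unfolding dL_dn_def by (rule DERIV_imp_deriv)
qed

lemma dL_dxd_v_eq:
  assumes w1: "0 < w$1" and G: "0 < Gpp H x w" and n: "n \<noteq> 0" and b: "b \<noteq> 1"
  shows "dL_dxd b m H 2 x w n = (1 - b) * (w$1) powr (1 + 2*b) * Gpp H x w powr (- b) / n"
proof -
  have "(\<Sum>\<nu>\<in>UNIV. (ppg H x 2 \<nu> - c * Kdu x 2 \<nu>) * w$\<nu>) = w$1" for c
    by (simp add: sum_4 ppg_def Kdu_def)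
  then have "dL_dxd b m H 2 x w n = (1 - b) * (w$1) powr (2*b) * Gpp H x w powr (- b) / n * w$1"
    using dL_dxd_eq[OF w1 G n b, of m 2] by (simp only:)
  also have "(w$1) powr (2*b) = (w$1) powr (1 + 2*b) / w$1"
    using w1 by (simp add: powr_add)
  finally show ?thesis
    using w1 by simp
qed

lemma mass_shell_ratio:
  fixes b m N u G \<pi> :: real
  assumes b: "b \<noteq> 1" "1 + b \<noteq> 0" and u: "0 < u" and G: "0 < G"
    and shell: "u powr (2*b) * G powr (1 - b) = m^2 * N^2"
    and \<pi>: "\<pi> = (1 - b) * u powr (1 + 2*b) * G powr (- b) / N"
  shows "G / u^2 = ((1 - b)^2 * m^2 / \<pi>^2) powr (1 / (1 + b))"
proof -
  have "m \<noteq> 0" and "N \<noteq> 0"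
    using shell u G by auto
  then have "\<pi> \<noteq> 0"
    using \<pi> u G b by simp
  obtain p q where u_exp: "u = exp p" and G_exp: "G = exp q"
    using u G by (metis exp_ln)
  have N2: "N^2 = exp (2*b*p + (1 - b)*q) / m^2"
    using shell \<open>m \<noteq> 0\<close> unfolding u_exp G_exp by (simp add: powr_def exp_add[symmetric] field_simps)
  have "\<pi>^2 = (1 - b)^2 * exp (2*(1 + 2*b)*p - 2*b*q) / N^2"
    unfolding \<pi> u_exp G_exp
    by (simp add: powr_def power_divide power_mult_distrib exp_diff flip: exp_of_nat_mult exp_add)
      (simp add: algebra_simps exp_minus field_simps)
  then have "(1 - b)^2 * m^2 / \<pi>^2 = exp (2*b*p + (1 - b)*q) / exp (2*(1 + 2*b)*p - 2*b*q)"
    unfolding N2 using b \<open>m \<noteq> 0\<close> \<open>\<pi> \<noteq> 0\<close> by (simp add: field_simps)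
  also have "\<dots> = exp ((1 + b) * (q - 2*p))"
    by (simp add: algebra_simps flip: exp_diff)
  finally show ?thesis
    using b unfolding u_exp G_exp by (simp add: powr_def exp_diff flip: exp_of_nat_mult)
qed

lemma conformal_charge_rate_eq_zero:
  fixes Y :: "real^4 \<Rightarrow> real^4"
  assumes w1: "0 < w$1" and G: "0 < Gpp H x w" and n: "n \<noteq> 0" and b: "b \<noteq> 1"
    and DY: "(Y has_derivative DY) (at x)" and DH: "(Hat H has_derivative DH) (at x)"
    and M2: "M2 = Gpp H x w / (w$1)^2"
    and lie: "\<And>\<mu> \<nu>. lie2 Y (\<lambda>z i j. ppg H z i j - b / (1 - b) * M2 * Kdu z i j) x \<mu> \<nu>
                 = 2 * \<Omega> * (ppg H x \<mu> \<nu> + M2 * Kdu x \<mu> \<nu>)"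
  shows "(\<Sum>\<mu>\<in>UNIV. DY w $ \<mu> * dL_dxd b m H \<mu> x w n + Y x $ \<mu> * dL_dx b m H \<mu> x w n) = 0"
proof -
  let ?T = "\<lambda>z i j. ppg H z i j - b / (1 - b) * M2 * Kdu z i j"
  let ?Tw = "\<lambda>\<mu>. \<Sum>\<nu>\<in>UNIV. ?T x \<mu> \<nu> * w$\<nu>"
  define c where "c = (1 - b) * (w$1) powr (2*b) * Gpp H x w powr (- b) / n"
  have momentum: "dL_dxd b m H \<mu> x w n = c * ?Tw \<mu>" for \<mu>
    using dL_dxd_eq[OF w1 G n b] unfolding M2 c_def by simp
  have force: "dL_dx b m H \<mu> x w n = c / 2 * ((w$1)^2 * DH (axis \<mu> 1))" for \<mu>
    using dL_dx_eq[OF G DH] unfolding c_def by simp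
  have sym: "?T x i j = ?T x j i" for i j
    using ppg_sym Kdu_sym by metis
  have "(\<Sum>\<mu>\<in>UNIV. \<Sum>\<nu>\<in>UNIV. w$\<mu> * w$\<nu> * pd (\<lambda>y. ?T y \<mu> \<nu>) \<rho> x) = (w$1)^2 * DH (axis \<rho> 1)" for \<rho>
    unfolding pd_ppg_minus_Kdu[OF DH] by (simp add: sum_4 power2_eq_square)
  then have "(\<Sum>\<mu>\<in>UNIV. Y x $ \<mu> * ((w$1)^2 * DH (axis \<mu> 1))) + 2 * (\<Sum>\<mu>\<in>UNIV. DY w $ \<mu> * ?Tw \<mu>)
      = (\<Sum>\<mu>\<in>UNIV. \<Sum>\<nu>\<in>UNIV. w$\<mu> * w$\<nu> * lie2 Y ?T x \<mu> \<nu>)"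
    using lie2_quadratic_form[where T = ?T, OF DY sym] by simp
  also have "\<dots> = 2 * \<Omega> * ((\<Sum>\<mu>\<in>UNIV. \<Sum>\<nu>\<in>UNIV. w$\<mu> * w$\<nu> * ppg H x \<mu> \<nu>)
                 + M2 * (\<Sum>\<mu>\<in>UNIV. \<Sum>\<nu>\<in>UNIV. w$\<mu> * w$\<nu> * Kdu x \<mu> \<nu>))"
    unfolding lie by (simp add: sum_distrib_left sum.distrib algebra_simps)
  also have "\<dots> = 2 * \<Omega> * (- Gpp H x w + M2 * (w$1)^2)"
    by (simp only: ppg_quadratic_form Kdu_quadratic_form)
  also have "\<dots> = 0"
    using w1 unfolding M2 by simp
  finally have contracted: "(\<Sum>\<mu>\<in>UNIV. Y x $ \<mu> * ((w$1)^2 * DH (axis \<mu> 1)))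
      + 2 * (\<Sum>\<mu>\<in>UNIV. DY w $ \<mu> * ?Tw \<mu>) = 0" .
  have "(\<Sum>\<mu>\<in>UNIV. DY w $ \<mu> * dL_dxd b m H \<mu> x w n + Y x $ \<mu> * dL_dx b m H \<mu> x w n)
      = c / 2 * ((\<Sum>\<mu>\<in>UNIV. Y x $ \<mu> * ((w$1)^2 * DH (axis \<mu> 1))) + 2 * (\<Sum>\<mu>\<in>UNIV. DY w $ \<mu> * ?Tw \<mu>))"
    unfolding momentum force by (simp add: sum.distrib sum_distrib_left algebra_simps)
  with contracted show ?thesis
    by simp
qed

lemma constant_on_interval_if_derivative_zero:
  fixes f :: "real \<Rightarrow> real"
  assumes "is_interval J" and "\<And>t. t \<in> J \<Longrightarrow> (f has_real_derivative 0) (at t)"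
  shows "\<exists>C. \<forall>t\<in>J. f t = C"
  using has_field_derivative_zero_constant[OF is_interval_convex[OF assms(1)]]
    assms(2) has_field_derivative_at_within by blast

lemma EL_solution_momentum_v_constant:
  assumes "EL_solution b m H J \<gamma> gd n" and "is_interval J"
  shows "\<exists>\<pi>v. \<forall>t\<in>J. dL_dxd b m H 2 (\<gamma> t) (gd t) (n t) = \<pi>v"
proof (rule constant_on_interval_if_derivative_zero[OF assms(2)])
  fix t assume "t \<in> J"
  then have "((\<lambda>s. dL_dxd b m H 2 (\<gamma> s) (gd s) (n s)) has_real_derivative
      dL_dx b m H 2 (\<gamma> t) (gd t) (n t)) (at t)"
    using assms(1) unfolding EL_solution_def by blast
  then show "((\<lambda>t. dL_dxd b m H 2 (\<gamma> t) (gd t) (n t)) has_real_derivative 0) (at t)"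
    by (simp only: dL_dx_v_eq_zero)
qed

lemma EL_solution_Gpp_ratio:
  assumes sol: "EL_solution b m H J \<gamma> gd n" and t: "t \<in> J"
    and b: "b \<noteq> 1" "1 + b \<noteq> 0"
    and n: "n t \<noteq> 0" and w1: "0 < gd t $ 1" and G: "0 < Gpp H (\<gamma> t) (gd t)"
  shows "Gpp H (\<gamma> t) (gd t) / (gd t $ 1)^2
       = ((1 - b)^2 * m^2 / (dL_dxd b m H 2 (\<gamma> t) (gd t) (n t))^2) powr (1 / (1 + b))"
proof (rule mass_shell_ratio[OF b w1 G])
  have "dL_dn b m H (\<gamma> t) (gd t) (n t) = 0"
    using sol t by (simp add: EL_solution_def)
  then show "(gd t $ 1) powr (2*b) * Gpp H (\<gamma> t) (gd t) powr (1 - b) = m^2 * (n t)^2"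
    using n by (simp add: dL_dn_eq field_simps)
  show "dL_dxd b m H 2 (\<gamma> t) (gd t) (n t)
      = (1 - b) * (gd t $ 1) powr (1 + 2*b) * Gpp H (\<gamma> t) (gd t) powr (- b) / n t"
    by (rule dL_dxd_v_eq[OF w1 G n b(1)])
qed

lemma EL_solution_conformal_charge_constant:
  fixes Y :: "real^4 \<Rightarrow> real^4"
  assumes sol: "EL_solution b m H J \<gamma> gd n" and J: "is_interval J" and b: "b \<noteq> 1"
    and H_diff: "\<forall>y. Hat H differentiable (at y)"
    and n: "\<forall>t\<in>J. n t \<noteq> 0" and w1: "\<forall>t\<in>J. 0 < gd t $ 1" and G: "\<forall>t\<in>J. 0 < Gpp H (\<gamma> t) (gd t)"
    and M2: "\<forall>t\<in>J. Gpp H (\<gamma> t) (gd t) / (gd t $ 1)^2 = M2"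
    and Y_diff: "\<forall>y. Y differentiable (at y)"
    and lie: "\<forall>y \<mu> \<nu>. lie2 Y (\<lambda>z i j. ppg H z i j - b / (1 - b) * M2 * Kdu z i j) y \<mu> \<nu>
                  = 2 * \<Omega> y * (ppg H y \<mu> \<nu> + M2 * Kdu y \<mu> \<nu>)"
  shows "\<exists>C. \<forall>t\<in>J. (\<Sum>\<mu>\<in>UNIV. Y (\<gamma> t) $ \<mu> * dL_dxd b m H \<mu> (\<gamma> t) (gd t) (n t)) = C"
proof (rule constant_on_interval_if_derivative_zero[OF J])
  fix t assume t: "t \<in> J"
  obtain DY where DY: "(Y has_derivative DY) (at (\<gamma> t))"
    using Y_diff by (auto simp: differentiable_def)
  obtain DH where DH: "(Hat H has_derivative DH) (at (\<gamma> t))"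
    using H_diff by (auto simp: differentiable_def)
  have \<gamma>': "(\<gamma> has_vector_derivative gd t) (at t)"
    and EL: "((\<lambda>s. dL_dxd b m H \<mu> (\<gamma> s) (gd s) (n s))
               has_real_derivative dL_dx b m H \<mu> (\<gamma> t) (gd t) (n t)) (at t)" for \<mu>
    using sol t by (auto simp: EL_solution_def)
  have Y\<gamma>: "((\<lambda>s. Y (\<gamma> s) $ \<mu>) has_real_derivative DY (gd t) $ \<mu>) (at t)" for \<mu>
    using bounded_linear.has_vector_derivative[OF bounded_linear_vec_nth
        has_vector_derivative_compose_derivative[OF \<gamma>' DY]]
    by (simp add: has_real_derivative_iff_has_vector_derivative)
  then have "((\<lambda>s. \<Sum>\<mu>\<in>UNIV. Y (\<gamma> s) $ \<mu> * dL_dxd b m H \<mu> (\<gamma> s) (gd s) (n s)) has_real_derivative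
      (\<Sum>\<mu>\<in>UNIV. DY (gd t) $ \<mu> * dL_dxd b m H \<mu> (\<gamma> t) (gd t) (n t)
                 + Y (\<gamma> t) $ \<mu> * dL_dx b m H \<mu> (\<gamma> t) (gd t) (n t))) (at t)"
    by (intro DERIV_sum) (use DERIV_mult'[OF Y\<gamma> EL] in \<open>simp add: add.commute\<close>)
  also have "(\<Sum>\<mu>\<in>UNIV. DY (gd t) $ \<mu> * dL_dxd b m H \<mu> (\<gamma> t) (gd t) (n t)
                 + Y (\<gamma> t) $ \<mu> * dL_dx b m H \<mu> (\<gamma> t) (gd t) (n t)) = 0"
  proof (rule conformal_charge_rate_eq_zero[OF _ _ _ b DY DH])
    show "0 < gd t $ 1" "0 < Gpp H (\<gamma> t) (gd t)" "n t \<noteq> 0"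
      using t w1 G n by auto
    show "M2 = Gpp H (\<gamma> t) (gd t) / (gd t $ 1)^2"
      using t M2 by simp
    show "lie2 Y (\<lambda>z i j. ppg H z i j - b / (1 - b) * M2 * Kdu z i j) (\<gamma> t) \<mu> \<nu>
        = 2 * \<Omega> (\<gamma> t) * (ppg H (\<gamma> t) \<mu> \<nu> + M2 * Kdu (\<gamma> t) \<mu> \<nu>)" for \<mu> \<nu>
      using lie by blast
  qed
  finally show "((\<lambda>s. \<Sum>\<mu>\<in>UNIV. Y (\<gamma> s) $ \<mu> * dL_dxd b m H \<mu> (\<gamma> s) (gd s) (n s))
      has_real_derivative 0) (at t)" .
qed

theorem mainTheorem7:
  fixes b m :: real
    and H :: "real \<Rightarrow> real \<Rightarrow> real \<Rightarrow> real"
    and J :: "real set"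
    and \<gamma> gd :: "real \<Rightarrow> real^4"
    and n :: "real \<Rightarrow> real"
  assumes b: "0 < b" "b < 1"
    and m: "0 < m"
    and H_diff: "\<forall>y. Hat H differentiable (at y)"
    and J: "open J" "is_interval J" "J \<noteq> {}"
    and sol: "EL_solution b m H J \<gamma> gd n"
    and n_pos: "\<forall>t\<in>J. 0 < n t"
    and udot_pos: "\<forall>t\<in>J. 0 < gd t $ 1"
    and G_pos: "\<forall>t\<in>J. 0 < Gpp H (\<gamma> t) (gd t)"
  shows "\<exists>\<pi>v>0.
     (\<forall>t\<in>J. dL_dxd b m H 2 (\<gamma> t) (gd t) (n t) = \<pi>v
            \<and> dL_dxd b m H 2 (\<gamma> t) (gd t) (n t)
                = (1 - b) * (gd t $ 1) powr (1 + 2 * b) * (Gpp H (\<gamma> t) (gd t)) powr (- b) / n t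
            \<and> Gpp H (\<gamma> t) (gd t) / (gd t $ 1)^2
                = ((1 - b)^2 * m^2 / \<pi>v^2) powr (1 / (1 + b))) \<and>
     (\<forall>(\<Upsilon> :: real^4 \<Rightarrow> real^4) (\<Omega> :: real^4 \<Rightarrow> real).
        let M2 = ((1 - b)^2 * m^2 / \<pi>v^2) powr (1 / (1 + b)) in
        (\<forall>y. \<Upsilon> differentiable (at y)) \<and>
        (\<forall>y \<mu> \<nu>. lie2 \<Upsilon> (\<lambda>z i j. ppg H z i j - b / (1 - b) * M2 * Kdu z i j) y \<mu> \<nu>
                  = 2 * \<Omega> y * (ppg H y \<mu> \<nu> + M2 * Kdu y \<mu> \<nu>))
        \<longrightarrow> (\<exists>C. \<forall>t\<in>J. (\<Sum>\<mu>\<in>UNIV. \<Upsilon> (\<gamma> t) $ \<mu> * dL_dxd b m H \<mu> (\<gamma> t) (gd t) (n t)) = C))"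
proof -
  have b': "b \<noteq> 1" "1 + b \<noteq> 0" and n: "\<forall>t\<in>J. n t \<noteq> 0"
    using b n_pos by auto
  obtain \<pi>v where \<pi>v: "\<forall>t\<in>J. dL_dxd b m H 2 (\<gamma> t) (gd t) (n t) = \<pi>v"
    using EL_solution_momentum_v_constant[OF sol J(2)] by blast
  have p_v: "\<forall>t\<in>J. dL_dxd b m H 2 (\<gamma> t) (gd t) (n t)
      = (1 - b) * (gd t $ 1) powr (1 + 2 * b) * Gpp H (\<gamma> t) (gd t) powr (- b) / n t"
    using dL_dxd_v_eq udot_pos G_pos n b'(1) by blast
  obtain t0 where t0: "t0 \<in> J"
    using J(3) by blast
  have "0 < (1 - b) * (gd t0 $ 1) powr (1 + 2 * b) * Gpp H (\<gamma> t0) (gd t0) powr (- b) / n t0"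
    using t0 udot_pos G_pos n_pos b by (intro divide_pos_pos mult_pos_pos) auto
  then have "0 < \<pi>v"
    using t0 \<pi>v p_v by simp
  moreover have ratio: "\<forall>t\<in>J. Gpp H (\<gamma> t) (gd t) / (gd t $ 1)^2 = ((1 - b)^2 * m^2 / \<pi>v^2) powr (1 / (1 + b))"
    using EL_solution_Gpp_ratio[OF sol _ b'] \<pi>v n udot_pos G_pos by simp
  ultimately show ?thesis
    unfolding Let_def using \<pi>v p_v EL_solution_conformal_charge_constant[OF sol J(2) b'(1) H_diff n udot_pos G_pos ratio]
    by blast
qed

end
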